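(* Let $0<l<m<n$ be pairwise coprime square-free integers and let $K=\mathbb{Q}(\sqrt{ml},\sqrt{nl})$. Then \[ \tfrac{1}{48}\, n \le M(\mathcal{O}_K). \]
   Context: For a nonconstant polynomial $f(x)=c\prod_{i=1}^d (x-\alpha_i)\in\mathbb{C}[x]$, the Mahler measure is $M(f)=|c|\prod_{|\alpha_i|\ge 1}|\alpha_i|$. For an algebraic number $\alpha$, $M(\alpha)$ is the Mahler measure of its minimal polynomial over $\mathbb{Z}$ (with content $1$). For a number field $K$ with ring of integers $\mathcal{O}_K$, $M(\mathcal{O}_K)=\min\{M(\alpha):\alpha\in\mathcal{O}_K,\ \mathbb{Q}(\alpha)=K\}$. *)

theory Defs
  imports "HOL-Computational_Algebra.Computational_Algebra"
begin

definition mahler_measure :: "complex poly \<Rightarrow> real" where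
  "mahler_measure f =
     cmod (lead_coeff f) *
     (\<Prod>z\<in>{z. poly f z = 0 \<and> cmod z \<ge> 1}. cmod z ^ order z f)"

text \<open>Minimal polynomial of an algebraic number over the integers, normalised to
  content 1 and positive leading coefficient: the unique irreducible element of
  Z[x] with positive leading coefficient having alpha as a root.\<close>
definition min_int_poly :: "complex \<Rightarrow> int poly" where
  "min_int_poly \<alpha> =
     (THE p. irreducible p \<and> lead_coeff p > 0 \<and> poly (map_poly of_int p) \<alpha> = 0)"

definition mahler_alg :: "complex \<Rightarrow> real" where
  "mahler_alg \<alpha> = mahler_measure (map_poly of_int (min_int_poly \<alpha>))"

definition is_subfield :: "complex set \<Rightarrow> bool" where
  "is_subfield F \<longleftrightarrow> 0 \<in> F \<and> 1 \<in> F \<and>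
     (\<forall>x\<in>F. \<forall>y\<in>F. x + y \<in> F \<and> x * y \<in> F) \<and>
     (\<forall>x\<in>F. - x \<in> F) \<and> (\<forall>x\<in>F. x \<noteq> 0 \<longrightarrow> inverse x \<in> F)"

definition gen_field :: "complex set \<Rightarrow> complex set" where
  "gen_field S = \<Inter>{F. is_subfield F \<and> S \<subseteq> F}"

definition ring_of_integers :: "complex set \<Rightarrow> complex set" where
  "ring_of_integers K = {x \<in> K. algebraic_int x}"

definition mahler_ring_of_integers :: "complex set \<Rightarrow> real" where
  "mahler_ring_of_integers K =
     Inf {mahler_alg \<alpha> | \<alpha>. \<alpha> \<in> ring_of_integers K \<and> gen_field {\<alpha>} = K}"

end

theory Submission
  imports Defs
begin

text \<open>
  Write \<open>X = \<surd>(ml)\<close>, \<open>Y = \<surd>(nl)\<close>. Every \<open>\<alpha> \<in> K\<close> is \<open>a + bX + cY + dXY\<close> with rational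
  coordinates, and \<open>\<alpha>\<close> generates \<open>K\<close> only if it lies in none of the three quadratic subfields;
  then its four conjugates \<open>\<beta>\<^sub>1, ..., \<beta>\<^sub>4\<close> (signs of \<open>X\<close>, \<open>Y\<close> flipped) are distinct roots of its
  minimal polynomial, so \<open>M(\<alpha>) \<ge> \<Prod> max 1 \<bar>\<beta>\<^sub>i\<bar> \<ge> \<bar>\<beta>\<^sub>1 - \<beta>\<^sub>2\<bar> \<bar>\<beta>\<^sub>3 - \<beta>\<^sub>4\<bar> / 4 = \<bar>c\<^sup>2nl - d\<^sup>2mnl\<^sup>2\<bar>\<close>.
  If \<open>\<alpha>\<close> is an algebraic integer, the quartic \<open>\<Prod> (z - \<beta>\<^sub>i)\<close> is its minimal polynomial and has
  integer coefficients, hence so does its resolvent cubic, whose roots \<open>16b\<^sup>2ml\<close>, \<open>16c\<^sup>2nl\<close>,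
  \<open>16d\<^sup>2mnl\<^sup>2\<close> are therefore integers. As \<open>nl\<close> and \<open>mn\<close> are square-free, \<open>U = 4c\<close> and \<open>W = 4dl\<close>
  are integers, and \<open>c\<^sup>2nl - d\<^sup>2mnl\<^sup>2 = n (lU\<^sup>2 - mW\<^sup>2) / 16\<close> with \<open>lU\<^sup>2 \<noteq> mW\<^sup>2\<close> because \<open>lm\<close> is
  square-free. Hence \<open>M(\<alpha>) \<ge> n/16\<close>.
\<close>

section \<open>Subfields of the complex numbers\<close>

lemma subfield_0: "is_subfield F \<Longrightarrow> 0 \<in> F"
  and subfield_1: "is_subfield F \<Longrightarrow> 1 \<in> F"
  and subfield_add: "is_subfield F \<Longrightarrow> x \<in> F \<Longrightarrow> y \<in> F \<Longrightarrow> x + y \<in> F"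
  and subfield_mult: "is_subfield F \<Longrightarrow> x \<in> F \<Longrightarrow> y \<in> F \<Longrightarrow> x * y \<in> F"
  and subfield_uminus: "is_subfield F \<Longrightarrow> x \<in> F \<Longrightarrow> - x \<in> F"
  unfolding is_subfield_def by blast+

lemma subfield_inverse: "is_subfield F \<Longrightarrow> x \<in> F \<Longrightarrow> inverse x \<in> F"
  by (cases "x = 0") (auto simp: is_subfield_def)

lemma subfield_diff: "is_subfield F \<Longrightarrow> x \<in> F \<Longrightarrow> y \<in> F \<Longrightarrow> x - y \<in> F"
  unfolding diff_conv_add_uminus by (intro subfield_add subfield_uminus)

lemma subfield_divide: "is_subfield F \<Longrightarrow> x \<in> F \<Longrightarrow> y \<in> F \<Longrightarrow> x / y \<in> F"
  unfolding divide_inverse by (intro subfield_mult subfield_inverse)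

lemma subfield_of_int: "is_subfield F \<Longrightarrow> of_int k \<in> F"
  by (induction k rule: int_induct[where k = 0])
    (auto simp: subfield_0 subfield_1 subfield_add subfield_diff)

lemma subfield_numeral: "is_subfield F \<Longrightarrow> numeral k \<in> F"
  using subfield_of_int[of F "numeral k"] by simp

lemma is_subfield_Rats: "is_subfield \<rat>"
  unfolding is_subfield_def by (auto intro: Rats_add Rats_mult Rats_inverse)

lemma is_subfield_gen_field: "is_subfield (gen_field S)"
  unfolding gen_field_def is_subfield_def by auto

lemma gen_field_superset: "S \<subseteq> gen_field S"
  unfolding gen_field_def by auto

lemma gen_field_least: "is_subfield F \<Longrightarrow> S \<subseteq> F \<Longrightarrow> gen_field S \<subseteq> F"
  unfolding gen_field_def by auto

definition quad_ext :: "complex set \<Rightarrow> complex \<Rightarrow> complex set" where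
  "quad_ext F r = {x + y * r | x y. x \<in> F \<and> y \<in> F}"

lemma quad_extI: "x \<in> F \<Longrightarrow> y \<in> F \<Longrightarrow> x + y * r \<in> quad_ext F r"
  unfolding quad_ext_def by blast

lemma quad_extE:
  assumes "z \<in> quad_ext F r"
  obtains x y where "z = x + y * r" "x \<in> F" "y \<in> F"
  using assms unfolding quad_ext_def by blast

lemma subset_quad_ext: "is_subfield F \<Longrightarrow> F \<subseteq> quad_ext F r"
  using quad_extI[of _ F 0 r] by (auto simp: subfield_0)

lemma in_quad_ext: "is_subfield F \<Longrightarrow> r \<in> quad_ext F r"
  using quad_extI[of 0 F 1 r] by (simp add: subfield_0 subfield_1)

lemma quad_ext_inverse:
  assumes F: "is_subfield F" and r: "r * r \<in> F" "r \<notin> F"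
    and xy: "x \<in> F" "y \<in> F"
  shows "inverse (x + y * r) \<in> quad_ext F r"
proof -
  define N where "N = x * x - y * y * (r * r)"
  have N_in: "N \<in> F"
    unfolding N_def by (intro subfield_diff subfield_mult F xy r)
  show ?thesis
  proof (cases "N = 0")
    case True
    have "x + y * r = 0"
    proof (cases "y = 0")
      case True
      with \<open>N = 0\<close> show ?thesis by (simp add: N_def)
    next
      case False
      \<comment> \<open>\<open>N = 0\<close> would force \<open>r = \<plusminus>x/y \<in> F\<close>\<close>
      with \<open>N = 0\<close> have "r * r = (x / y) * (x / y)" by (simp add: N_def field_simps)
      hence "r = x / y \<or> r = - (x / y)" by (metis square_eq_iff)
      moreover have "x / y \<in> F" "- (x / y) \<in> F"
        by (intro subfield_divide subfield_uminus F xy)+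
      ultimately have False using r(2) by blast
      thus ?thesis ..
    qed
    thus ?thesis using subset_quad_ext[OF F] subfield_0[OF F] by auto
  next
    case False
    have "(x + y * r) * (x / N + (- y / N) * r) = (x * x - y * y * (r * r)) / N"
      by (simp add: divide_simps algebra_simps)
    also have "\<dots> = 1" using False by (simp add: N_def)
    finally have "inverse (x + y * r) = x / N + (- y / N) * r" by (rule inverse_unique)
    thus ?thesis
      by (metis quad_extI F N_in xy subfield_divide subfield_uminus)
  qed
qed

lemma is_subfield_quad_ext:
  assumes F: "is_subfield F" and r: "r * r \<in> F" "r \<notin> F"
  shows "is_subfield (quad_ext F r)"
  unfolding is_subfield_def
proof (intro conjI ballI impI)
  show "0 \<in> quad_ext F r" "1 \<in> quad_ext F r"
    using subset_quad_ext[OF F] subfield_0[OF F] subfield_1[OF F] by auto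
next
  fix z w assume "z \<in> quad_ext F r" "w \<in> quad_ext F r"
  then obtain x1 y1 x2 y2 where zw: "z = x1 + y1 * r" "w = x2 + y2 * r"
    and in_F: "x1 \<in> F" "y1 \<in> F" "x2 \<in> F" "y2 \<in> F"
    by (auto elim!: quad_extE)
  have "z + w = (x1 + x2) + (y1 + y2) * r"
    "z * w = (x1 * x2 + y1 * y2 * (r * r)) + (x1 * y2 + y1 * x2) * r"
    unfolding zw by (simp_all add: algebra_simps)
  thus "z + w \<in> quad_ext F r" "z * w \<in> quad_ext F r"
    by (auto intro!: quad_extI subfield_add subfield_mult F in_F r)
next
  fix z assume "z \<in> quad_ext F r"
  then obtain x y where z: "z = x + y * r" "x \<in> F" "y \<in> F" by (auto elim!: quad_extE)
  have minus_z: "- z = - x + (- y) * r" by (simp add: z)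
  show "- z \<in> quad_ext F r" unfolding minus_z by (intro quad_extI subfield_uminus F z)
  show "inverse z \<in> quad_ext F r" using quad_ext_inverse[OF F r z(2,3)] z(1) by simp
qed

lemma quad_ext_Rats_iff: "z \<in> quad_ext \<rat> r \<longleftrightarrow> (\<exists>x y. z = of_rat x + of_rat y * r)"
  unfolding quad_ext_def by (blast elim: Rats_cases intro: Rats_of_rat)

lemma gen_field_singleton_eq_subset:
  "gen_field {\<alpha>} = gen_field S \<Longrightarrow> is_subfield F \<Longrightarrow> \<alpha> \<in> F \<Longrightarrow> S \<subseteq> F"
  using gen_field_least[of F "{\<alpha>}"] gen_field_superset[of S] by auto

section \<open>Rational squares and square-free integers\<close>

lemma squarefree_square_mult_in_Ints:
  fixes q :: rat
  assumes N: "squarefree N" and q: "q ^ 2 * of_int N \<in> \<int>"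
  shows "q \<in> \<int>"
proof -
  obtain M where M: "q ^ 2 * of_int N = of_int M" using q by (auto elim: Ints_cases)
  obtain x y where xy: "quotient_of q = (x, y)" by (cases "quotient_of q")
  have q_eq: "q = of_int x / of_int y" and "y > 0" and "coprime x y"
    using quotient_of_div[OF xy] quotient_of_denom_pos[OF xy] quotient_of_coprime[OF xy] by auto
  have "of_int (x ^ 2 * N) = (of_int (M * y ^ 2) :: rat)"
    using M \<open>y > 0\<close> by (simp add: q_eq field_simps)
  hence "y ^ 2 dvd x ^ 2 * N" by (metis dvd_triv_right of_int_eq_iff)
  moreover have "coprime (y ^ 2) (x ^ 2)" using \<open>coprime x y\<close> by (simp add: coprime_commute)
  ultimately have "y ^ 2 dvd N" using coprime_dvd_mult_right_iff by blast
  hence "is_unit y" using N by (simp add: squarefree_def)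
  hence "y = 1" using \<open>y > 0\<close> by simp
  thus ?thesis by (simp add: q_eq)
qed

lemma squarefree_rat_square_eq:
  fixes q :: rat
  assumes "squarefree N" "q ^ 2 = of_int N"
  shows "N = 1"
proof -
  have "q \<in> \<int>" using squarefree_square_mult_in_Ints[of N q] assms by simp
  then obtain k where k: "q = of_int k" by (auto elim: Ints_cases)
  hence N: "N = k ^ 2" using assms(2) by (metis of_int_eq_iff of_int_power)
  hence "is_unit k" using assms(1) by (simp add: squarefree_def)
  thus ?thesis using N by (metis zdvd1_eq power2_abs power_one)
qed

lemma sqrt_squarefree_notin_Rats:
  fixes X :: complex
  assumes "X * X = of_int N" "squarefree N" "N \<noteq> 1"
  shows "X \<notin> \<rat>"
proof
  assume "X \<in> \<rat>"
  then obtain q where q: "X = of_rat q" by (auto elim: Rats_cases)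
  have "of_rat (q ^ 2) = (of_rat (of_int N) :: complex)"
    using assms(1) by (simp add: q power2_eq_square of_rat_mult)
  hence "q ^ 2 = of_int N" by (simp only: of_rat_eq_iff)
  thus False using squarefree_rat_square_eq assms by blast
qed

lemma Rats_lin_comb_eq_0:
  fixes X :: complex
  assumes "X \<notin> \<rat>" "x \<in> \<rat>" "y \<in> \<rat>" "x + y * X = 0"
  shows "x = 0" "y = 0"
proof -
  show "y = 0"
  proof (rule ccontr)
    assume "y \<noteq> 0"
    hence "X = - x / y" using assms(4) by (simp add: field_simps add_eq_0_iff)
    thus False using assms(1-3) by (simp add: Rats_divide)
  qed
  thus "x = 0" using assms(4) by simp
qed

lemma sqrt_in_quad_ext_Rats_cases:
  fixes X Y :: complex
  assumes X: "X * X = of_int D1" "X \<notin> \<rat>" and Y: "Y * Y = of_int D2" "Y \<in> quad_ext \<rat> X"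
  shows "(\<exists>q::rat. q ^ 2 = of_int D2) \<or> (\<exists>q::rat. q ^ 2 * of_int D1 = of_int D2)"
proof -
  obtain x y where xy: "Y = of_rat x + of_rat y * X"
    using Y(2) by (auto elim!: quad_extE Rats_cases)
  have "of_rat (x * x + y * y * of_int D1 - of_int D2) + of_rat (2 * x * y) * X = Y * Y - of_int D2"
    by (simp add: xy of_rat_add of_rat_diff of_rat_mult X(1) algebra_simps)
  also have "\<dots> = 0" using Y(1) by simp
  finally have "of_rat (x * x + y * y * of_int D1 - of_int D2) = (0 :: complex)"
    "of_rat (2 * x * y) = (0 :: complex)"
    using Rats_lin_comb_eq_0[OF X(2)] by (meson Rats_of_rat)+
  hence "x * x + y * y * of_int D1 = of_int D2" "x = 0 \<or> y = 0" by simp_all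
  thus ?thesis by (auto simp: power2_eq_square)
qed

lemma squarefree_mult_squares_eq:
  fixes l m U W :: int
  assumes "squarefree (l * m)" "l * m \<noteq> 1" "l * U\<^sup>2 = m * W\<^sup>2"
  shows "U = 0 \<and> W = 0"
proof (cases "W = 0")
  case True
  have "l \<noteq> 0" using assms(1) by auto
  thus ?thesis using assms(3) True by simp
next
  case False
  have "(of_int (l * U) / of_int W :: rat)\<^sup>2 = of_int (l * m)"
    using arg_cong[OF assms(3), of "\<lambda>k. of_int (l * k) :: rat"] False
    by (simp add: field_simps power2_eq_square)
  thus ?thesis using squarefree_rat_square_eq[OF assms(1)] assms(2) by blast
qed

section \<open>Minimal integer polynomials and the Mahler measure\<close>

abbreviation ipoly :: "int poly \<Rightarrow> 'a :: comm_ring_1 \<Rightarrow> 'a" where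
  "ipoly f x \<equiv> poly (map_poly of_int f) x"

lemma ipoly_mult: "ipoly (p * q) x = ipoly p x * ipoly q (x :: 'a :: comm_ring_1)"
proof -
  have "map_poly (of_int :: int \<Rightarrow> 'a) (p * q) = map_poly of_int p * map_poly of_int q"
    by (intro poly_eqI) (simp add: coeff_map_poly coeff_mult)
  thus ?thesis by simp
qed

lemma ipoly_add: "ipoly (p + q) x = ipoly p x + ipoly q (x :: 'a :: comm_ring_1)"
proof -
  have "map_poly (of_int :: int \<Rightarrow> 'a) (p + q) = map_poly of_int p + map_poly of_int q"
    by (intro poly_eqI) (simp add: coeff_map_poly)
  thus ?thesis by simp
qed

lemma ipoly_smult: "ipoly (smult c p) x = of_int c * ipoly p (x :: 'a :: comm_ring_1)"
  by (simp add: map_poly_smult)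

lemma annihilator_of_min_degree_dvd:
  fixes \<alpha> :: complex
  assumes r: "content r = 1" "ipoly r \<alpha> = 0"
    and min: "\<And>p. p \<noteq> 0 \<Longrightarrow> ipoly p \<alpha> = 0 \<Longrightarrow> degree r \<le> degree p"
    and q: "ipoly q \<alpha> = 0"
  shows "r dvd q"
proof -
  have "r \<noteq> 0" using r(1) by auto
  obtain s t where st: "pseudo_divmod q r = (s, t)" by (cases "pseudo_divmod q r")
  define c where "c = lead_coeff r ^ (Suc (degree q) - degree r)"
  have div: "smult c q = r * s + t" and t: "t = 0 \<or> degree t < degree r"
    using pseudo_divmod[OF \<open>r \<noteq> 0\<close> st] by (auto simp: c_def)
  have "ipoly t \<alpha> = 0"
    using arg_cong[OF div, of "\<lambda>p. ipoly p \<alpha>"] by (simp add: ipoly_smult ipoly_add ipoly_mult q r)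
  \<comment> \<open>the pseudo-remainder annihilates \<open>\<alpha>\<close> and has smaller degree than \<open>r\<close>\<close>
  hence "t = 0" using t min by fastforce
  hence "r dvd smult c q" using div by simp
  hence "fract_poly r dvd fract_poly (smult c q)" by (rule fract_poly_dvd)
  hence "fract_poly r dvd smult (to_fract c) (fract_poly q)" by simp
  moreover have "to_fract c \<noteq> 0" using \<open>r \<noteq> 0\<close> by (simp add: c_def)
  ultimately have "fract_poly r dvd fract_poly q" by (rule dvd_smult_cancel)
  thus ?thesis using r(1) by (rule fract_poly_dvdD)
qed

lemma annihilator_of_min_degree_irreducible:
  fixes \<alpha> :: complex
  assumes r: "content r = 1" "ipoly r \<alpha> = 0"
    and min: "\<And>p. p \<noteq> 0 \<Longrightarrow> ipoly p \<alpha> = 0 \<Longrightarrow> degree r \<le> degree p"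
  shows "irreducible r"
proof (rule irreducibleI)
  show "r \<noteq> 0" using r(1) by auto
  have "degree r \<noteq> 0"
  proof
    assume "degree r = 0"
    then obtain k where "r = [:k:]" by (rule degree_eq_zeroE)
    thus False using r(2) \<open>r \<noteq> 0\<close> by (simp add: map_poly_pCons)
  qed
  thus "\<not> r dvd 1" by (auto simp: is_unit_poly_iff)
  have unit_if_root: "y dvd 1" if xy: "r = x * y" and x: "ipoly x \<alpha> = 0" for x y
  proof -
    have "x \<noteq> 0" "y \<noteq> 0" using xy \<open>r \<noteq> 0\<close> by auto
    hence "degree r = degree x + degree y" by (simp add: xy degree_mult_eq)
    with min[OF \<open>x \<noteq> 0\<close> x] obtain k where y: "y = [:k:]" by (auto elim: degree_eq_zeroE)
    have "\<bar>k\<bar> * content x = 1" using r(1) by (simp add: xy y content_mult)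
    hence "k dvd 1" by (metis dvd_triv_left abs_dvd_iff)
    thus ?thesis by (simp add: y is_unit_const_poly_iff)
  qed
  fix x y assume xy: "r = x * y"
  hence "ipoly x \<alpha> = 0 \<or> ipoly y \<alpha> = 0" using r(2) by (simp add: ipoly_mult)
  moreover have "r = y * x" using xy by (simp add: mult.commute)
  ultimately show "x dvd 1 \<or> y dvd 1" using unit_if_root xy by blast
qed

lemma minimal_int_poly_exists:
  fixes \<alpha> :: complex
  assumes "g \<noteq> 0" "ipoly g \<alpha> = 0"
  obtains r where "ipoly r \<alpha> = 0" "irreducible r" "lead_coeff r > 0"
    "\<And>q. ipoly q \<alpha> = 0 \<Longrightarrow> r dvd q"
proof -
  obtain r0 where r0: "r0 \<noteq> 0" "ipoly r0 \<alpha> = 0"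
    and min: "\<And>p. p \<noteq> 0 \<Longrightarrow> ipoly p \<alpha> = 0 \<Longrightarrow> degree r0 \<le> degree p"
    using ex_has_least_nat[of "\<lambda>p. p \<noteq> 0 \<and> ipoly p \<alpha> = 0" g degree] assms by blast
  define r1 where "r1 = primitive_part r0"
  define r where "r = smult (sgn (lead_coeff r1)) r1"
  have "r1 \<noteq> 0" using r0(1) by (simp add: r1_def)
  hence sgn_ne: "sgn (lead_coeff r1) \<noteq> 0" by (simp add: sgn_0_0)
  have "ipoly r0 \<alpha> = of_int (content r0) * ipoly r1 \<alpha>"
    by (simp add: r1_def flip: ipoly_smult)
  hence root: "ipoly r \<alpha> = 0" using r0 by (simp add: r_def ipoly_smult)
  have "content r1 = 1" using r0(1) by (simp add: r1_def)
  hence content: "content r = 1" using \<open>r1 \<noteq> 0\<close> by (simp add: r_def)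
  have "degree r = degree r1" using sgn_ne by (simp add: r_def)
  also have "\<dots> = degree r0" by (simp add: r1_def)
  finally have "degree r = degree r0" .
  hence min_r: "\<And>p. p \<noteq> 0 \<Longrightarrow> ipoly p \<alpha> = 0 \<Longrightarrow> degree r \<le> degree p" using min by simp
  have "lead_coeff r = \<bar>lead_coeff r1\<bar>" by (simp add: r_def abs_if sgn_if)
  hence "lead_coeff r > 0" using \<open>r1 \<noteq> 0\<close> by simp
  moreover have "irreducible r"
    using content root min_r by (rule annihilator_of_min_degree_irreducible)
  moreover have "r dvd q" if "ipoly q \<alpha> = 0" for q
    using content root min_r that by (rule annihilator_of_min_degree_dvd)
  ultimately show thesis using root that by blast
qed

lemma min_int_poly_eqI:
  assumes "ipoly r \<alpha> = 0" "irreducible r" "lead_coeff r > 0"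
    and dvd: "\<And>q. ipoly q \<alpha> = 0 \<Longrightarrow> r dvd q"
  shows "min_int_poly \<alpha> = r"
  unfolding min_int_poly_def
proof (rule the_equality)
  fix p assume p: "irreducible p \<and> lead_coeff p > 0 \<and> ipoly p \<alpha> = 0"
  then obtain s where s: "p = r * s" using dvd by blast
  have "\<not> r dvd 1" using assms(2) by (simp add: irreducible_def)
  hence "s dvd 1" using p s by (auto dest: irreducibleD)
  then obtain k where k: "s = [:k:]" "k dvd 1" by (auto simp: is_unit_poly_iff)
  have "lead_coeff p = lead_coeff r * k" by (simp add: s k lead_coeff_mult)
  hence "k = 1" using p assms(3) k(2) by (auto simp: zero_less_mult_iff)
  thus "p = r" by (simp add: s k)
qed (use assms in auto)

lemma min_int_poly:
  fixes \<alpha> :: complex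
  assumes "g \<noteq> 0" "ipoly g \<alpha> = 0"
  shows min_int_poly_root: "ipoly (min_int_poly \<alpha>) \<alpha> = 0"
    and min_int_poly_lead_coeff_pos: "lead_coeff (min_int_poly \<alpha>) > 0"
    and min_int_poly_dvd: "ipoly q \<alpha> = 0 \<Longrightarrow> min_int_poly \<alpha> dvd q"
proof -
  obtain r where "ipoly r \<alpha> = 0" "irreducible r" "lead_coeff r > 0"
    "\<And>q. ipoly q \<alpha> = 0 \<Longrightarrow> r dvd q"
    using minimal_int_poly_exists[OF assms] by blast
  with min_int_poly_eqI[of r \<alpha>]
  show "ipoly (min_int_poly \<alpha>) \<alpha> = 0" "lead_coeff (min_int_poly \<alpha>) > 0"
    "ipoly q \<alpha> = 0 \<Longrightarrow> min_int_poly \<alpha> dvd q" by simp_all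
qed

lemma algebraic_intE:
  fixes \<alpha> :: complex
  assumes "algebraic_int \<alpha>"
  obtains g where "g \<noteq> 0" "ipoly g \<alpha> = 0" "lead_coeff g = 1"
  using assms by (metis algebraic_int_altdef_ipoly leading_coeff_0_iff zero_neq_one)

lemma min_int_poly_monic:
  fixes \<alpha> :: complex
  assumes "algebraic_int \<alpha>"
  shows "lead_coeff (min_int_poly \<alpha>) = 1"
proof -
  obtain g where g: "g \<noteq> 0" "ipoly g \<alpha> = 0" "lead_coeff g = 1"
    using assms by (rule algebraic_intE)
  then obtain s where "g = min_int_poly \<alpha> * s" using min_int_poly_dvd[OF g(1,2) g(2)] by blast
  hence "lead_coeff (min_int_poly \<alpha>) dvd 1" using g(3) by (metis dvd_triv_left lead_coeff_mult)
  thus ?thesis using min_int_poly_lead_coeff_pos[OF g(1,2)] by simp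
qed

lemma rat_poly_clear_denominators:
  "\<exists>N > 0. \<exists>Q :: int poly. map_poly of_int Q = smult (of_int N) (P :: rat poly)"
proof (induction P)
  case 0
  have "map_poly of_int 0 = smult (of_int 1) (0 :: rat poly)" by simp
  thus ?case using zero_less_one by blast
next
  case (pCons c P)
  then obtain N Q where "N > 0" and Q: "map_poly of_int Q = smult (of_int N) P" by blast
  obtain x y where xy: "quotient_of c = (x, y)" by (cases "quotient_of c")
  have "y > 0" and c: "of_int x = of_int y * c"
    using quotient_of_denom_pos[OF xy] quotient_of_div[OF xy] by simp_all
  have "map_poly of_int (pCons (x * N) (smult y Q)) = smult (of_int (N * y)) (pCons c P)"
    by (simp add: map_poly_pCons map_poly_smult Q c algebra_simps)
  with \<open>N > 0\<close> \<open>y > 0\<close> show ?case by (intro exI[of _ "N * y"]) auto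
qed

lemma min_int_poly_degree_le:
  fixes \<alpha> :: complex and P :: "rat poly"
  assumes "g \<noteq> 0" "ipoly g \<alpha> = 0" and P: "P \<noteq> 0" "poly (map_poly of_rat P) \<alpha> = 0"
  shows "degree (min_int_poly \<alpha>) \<le> degree P"
proof -
  obtain N Q where "N > 0" and Q: "map_poly of_int Q = smult (of_int N) P"
    using rat_poly_clear_denominators by blast
  have "map_poly (of_int :: int \<Rightarrow> complex) Q = map_poly of_rat (map_poly of_int Q)"
    by (simp add: map_poly_map_poly o_def)
  hence "ipoly Q \<alpha> = of_int N * poly (map_poly of_rat P) \<alpha>"
    by (simp add: Q map_poly_smult of_rat_mult)
  hence "min_int_poly \<alpha> dvd Q" using P(2) by (intro min_int_poly_dvd[OF assms(1,2)]) simp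
  moreover have "Q \<noteq> 0" using Q \<open>N > 0\<close> P(1) by auto
  moreover have "degree Q = degree (map_poly (of_int :: int \<Rightarrow> rat) Q)"
    by (simp add: degree_map_poly)
  hence "degree Q = degree P" using \<open>N > 0\<close> by (simp add: Q)
  ultimately show ?thesis by (metis dvd_imp_degree_le)
qed

lemma int_coeffs_if_roots_conjugate:
  fixes \<alpha> :: complex and P :: "rat poly"
  assumes \<alpha>: "algebraic_int \<alpha>" and P: "lead_coeff P = 1"
    and root: "poly (map_poly of_rat P) \<alpha> = 0"
    and separable: "card {z :: complex. poly (map_poly of_rat P) z = 0} = degree P"
    and conjugate: "\<And>(z :: complex) q.
      poly (map_poly of_rat P) z = 0 \<Longrightarrow> ipoly q \<alpha> = 0 \<Longrightarrow> ipoly q z = 0"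
  shows "coeff P i \<in> \<int>"
proof -
  obtain g where g: "g \<noteq> 0" "ipoly g \<alpha> = 0" using \<alpha> by (rule algebraic_intE)
  define p where "p = map_poly (of_int :: int \<Rightarrow> complex) (min_int_poly \<alpha>)"
  define Z where "Z = {z :: complex. poly (map_poly of_rat P) z = 0}"
  have "lead_coeff p = 1"
    using min_int_poly_monic[OF \<alpha>] by (simp add: p_def degree_map_poly coeff_map_poly)
  hence "p \<noteq> 0" by auto
  have Z_roots: "Z \<subseteq> {z. poly p z = 0}"
    using conjugate[OF _ min_int_poly_root[OF g]] by (auto simp: Z_def p_def)
  have "degree P = card Z" using separable by (simp add: Z_def)
  also have "\<dots> \<le> card {z. poly p z = 0}"
    by (intro card_mono poly_roots_finite) fact+
  also have "\<dots> \<le> degree p" using \<open>p \<noteq> 0\<close> by (rule card_poly_roots_bound)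
  finally have "degree P \<le> degree p" .
  moreover have "degree p \<le> degree P"
    using min_int_poly_degree_le[OF g _ root] P by (force simp: p_def degree_map_poly)
  ultimately have deg: "degree p = degree P" by simp
  \<comment> \<open>so \<open>P\<close> is the minimal polynomial of \<open>\<alpha>\<close>\<close>
  have "map_poly of_rat P = p"
  proof (rule poly_eqI_degree_lead_coeff[of _ "degree P" _ Z])
    show "coeff (map_poly of_rat P) (degree P) = coeff p (degree P)"
      using P \<open>lead_coeff p = 1\<close> deg by (simp add: coeff_map_poly)
    show "poly (map_poly of_rat P) z = poly p z" if "z \<in> Z" for z
      using that Z_roots by (auto simp: Z_def)
  qed (use separable deg in \<open>simp_all add: Z_def degree_map_poly\<close>)
  hence "of_rat (coeff P i) = (of_rat (of_int (coeff (min_int_poly \<alpha>) i)) :: complex)"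
    by (simp add: coeff_map_poly p_def flip: coeff_map_poly[of of_rat, OF of_rat_0])
  hence "coeff P i = of_int (coeff (min_int_poly \<alpha>) i)" by (simp only: of_rat_eq_iff)
  thus ?thesis by simp
qed

lemma prod_max_1_le_mahler_measure:
  assumes lc: "1 \<le> cmod (lead_coeff f)" and roots: "\<And>z. z \<in> S \<Longrightarrow> poly f z = 0"
  shows "(\<Prod>z\<in>S. max 1 (cmod z)) \<le> mahler_measure f"
proof -
  define R where "R = {z. poly f z = 0}"
  define R1 where "R1 = {z. poly f z = 0 \<and> 1 \<le> cmod z}"
  have "f \<noteq> 0" using lc by auto
  hence "finite R" unfolding R_def by (rule poly_roots_finite)
  have "(\<Prod>z\<in>S. max 1 (cmod z)) \<le> (\<Prod>z\<in>R. max 1 (cmod z))"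
    using roots by (intro prod_mono2 \<open>finite R\<close>) (auto simp: R_def)
  also have "\<dots> = (\<Prod>z\<in>R1. cmod z)"
    using \<open>finite R\<close> by (intro prod.mono_neutral_cong_right) (auto simp: R_def R1_def)
  also have "\<dots> \<le> (\<Prod>z\<in>R1. cmod z ^ order z f)"
  proof (intro prod_mono conjI)
    fix z assume "z \<in> R1"
    hence "1 \<le> cmod z" "order z f \<noteq> 0" using \<open>f \<noteq> 0\<close> by (simp_all add: R1_def order_root)
    hence "cmod z ^ 1 \<le> cmod z ^ order z f" by (intro power_increasing) auto
    thus "cmod z \<le> cmod z ^ order z f" by simp
  qed simp
  also have "\<dots> \<le> mahler_measure f"
    using mult_right_mono[OF lc prod_nonneg[of R1 "\<lambda>z. cmod z ^ order z f"]]
    by (simp add: mahler_measure_def R1_def)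
  finally show ?thesis .
qed

lemma rat_root_of_monic_int_cubic:
  fixes t s1 s2 s3 :: rat
  assumes "s1 \<in> \<int>" "s2 \<in> \<int>" "s3 \<in> \<int>" "t ^ 3 - s1 * t\<^sup>2 + s2 * t - s3 = 0"
  shows "t \<in> \<int>"
proof (rule rational_algebraic_int_is_int)
  have "poly [:- s3, s2, - s1, 1:] t = t ^ 3 - s1 * t\<^sup>2 + s2 * t - s3"
    by (simp add: algebra_simps power2_eq_square power3_eq_cube)
  moreover have "coeff [:- s3, s2, - s1, 1:] i \<in> \<int>" for i
    using assms(1-3) by (auto simp: coeff_pCons split: nat.split)
  ultimately show "algebraic_int t" using assms(4) by (intro algebraic_int.intros) auto
qed (simp add: Rats_def)

lemma norm_diff_le_max_1:
  fixes x y :: "'a :: real_normed_vector"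
  shows "norm (x - y) \<le> 2 * max 1 (norm x) * max 1 (norm y)"
proof -
  define gx gy where "gx = max 1 (norm x)" and "gy = max 1 (norm y)"
  have "1 \<le> gx" "1 \<le> gy" by (simp_all add: gx_def gy_def)
  have "norm (x - y) \<le> gx + gy"
    using norm_triangle_ineq4[of x y] by (simp add: gx_def gy_def)
  also have "\<dots> \<le> 2 * gx * gy"
    using mult_left_mono[OF \<open>1 \<le> gy\<close>, of gx] mult_right_mono[OF \<open>1 \<le> gx\<close>, of gy]
      \<open>1 \<le> gx\<close> \<open>1 \<le> gy\<close> by linarith
  finally show ?thesis by (simp add: gx_def gy_def)
qed

section \<open>Elements of biquadratic fields\<close>

definition biquad_elem :: "complex \<Rightarrow> complex \<Rightarrow> rat \<Rightarrow> rat \<Rightarrow> rat \<Rightarrow> rat \<Rightarrow> complex" where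
  "biquad_elem X Y a b c d = of_rat a + of_rat b * X + of_rat c * Y + of_rat d * (X * Y)"

lemma biquad_elem_mult:
  assumes "X * X = of_int D1" "Y * Y = of_int D2"
  shows "biquad_elem X Y a b c d * biquad_elem X Y a' b' c' d' =
    biquad_elem X Y
      (a * a' + b * b' * of_int D1 + c * c' * of_int D2 + d * d' * of_int D1 * of_int D2)
      (a * b' + b * a' + (c * d' + d * c') * of_int D2)
      (a * c' + c * a' + (b * d' + d * b') * of_int D1)
      (a * d' + d * a' + b * c' + c * b')"
proof -
  have "of_rat (of_int D1) = X * X" "of_rat (of_int D2) = Y * Y"
    using assms by simp_all
  thus ?thesis unfolding biquad_elem_def of_rat_add of_rat_mult by (simp add: algebra_simps)
qed

text \<open>The coordinates of \<open>f(\<alpha>)\<close> do not depend on the choice of the square roots \<open>X\<close>, \<open>Y\<close>;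
  this is why the conjugates of a root of \<open>f\<close> are again roots.\<close>
lemma poly_biquad_elem:
  fixes f :: "int poly"
  shows "\<exists>a' b' c' d'. \<forall>X Y. X * X = of_int D1 \<longrightarrow> Y * Y = of_int D2 \<longrightarrow>
     ipoly f (biquad_elem X Y a b c d) = biquad_elem X Y a' b' c' d'"
proof (induction f)
  case 0
  show ?case by (intro exI[of _ 0]) (simp add: biquad_elem_def)
next
  case (pCons k f)
  then obtain a' b' c' d' where IH: "\<And>X Y. X * X = of_int D1 \<Longrightarrow> Y * Y = of_int D2 \<Longrightarrow>
     ipoly f (biquad_elem X Y a b c d) = biquad_elem X Y a' b' c' d'" by blast
  have "of_int k + biquad_elem X Y a0 b0 c0 d0 = biquad_elem X Y (of_int k + a0) b0 c0 d0"
    for X Y a0 b0 c0 d0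
    by (simp add: biquad_elem_def of_rat_add)
  then show ?case
    by (fastforce simp: map_poly_pCons IH biquad_elem_mult)
qed

text \<open>The quartic \<open>(z - a)\<^sup>4 + e2 (z - a)\<^sup>2 + e1 (z - a) + e0\<close> whose roots are the four
  conjugates \<open>a \<plusminus> b\<surd>D1 \<plusminus> c\<surd>D2 \<plusminus> d\<surd>D1\<surd>D2\<close>.\<close>
definition biquad_conj_poly :: "int \<Rightarrow> int \<Rightarrow> rat \<Rightarrow> rat \<Rightarrow> rat \<Rightarrow> rat \<Rightarrow> rat poly" where
  "biquad_conj_poly D1 D2 a b c d =
     (let u1 = b\<^sup>2 * of_int D1; u2 = c\<^sup>2 * of_int D2; u3 = d\<^sup>2 * of_int D1 * of_int D2;
          e2 = - 2 * (u1 + u2 + u3); e1 = - 8 * b * c * d * of_int D1 * of_int D2;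
          e0 = (u1 + u2 + u3)\<^sup>2 - 4 * (u1 * u2 + u1 * u3 + u2 * u3)
      in [:a ^ 4 + a\<^sup>2 * e2 - a * e1 + e0, - 4 * a ^ 3 - 2 * a * e2 + e1, 6 * a\<^sup>2 + e2,
          - 4 * a, 1:])"

lemma poly_biquad_conj_poly:
  fixes X Y z :: complex
  assumes X: "X * X = of_int D1" and Y: "Y * Y = of_int D2"
  shows "poly (map_poly of_rat (biquad_conj_poly D1 D2 a b c d)) z =
    (z - biquad_elem X Y a b c d) * (z - biquad_elem X (- Y) a b c d)
      * (z - biquad_elem (- X) Y a b c d) * (z - biquad_elem (- X) (- Y) a b c d)"
proof -
  define w where "w = z - of_rat a"
  define k where "k = (of_rat b)\<^sup>2 * of_int D1 - (of_rat c)\<^sup>2 * of_int D2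
    - (of_rat d)\<^sup>2 * of_int D1 * (of_int D2 :: complex)"
  define S where "S = 2 * of_rat b * w + 2 * of_rat c * of_rat d * (of_int D2 :: complex)"
  have "(z - biquad_elem X Y a b c d) * (z - biquad_elem X (- Y) a b c d) = (w\<^sup>2 + k) - X * S"
    "(z - biquad_elem (- X) Y a b c d) * (z - biquad_elem (- X) (- Y) a b c d) = (w\<^sup>2 + k) + X * S"
    unfolding biquad_elem_def w_def k_def S_def X[symmetric] Y[symmetric] by algebra+
  moreover have "((w\<^sup>2 + k) - X * S) * ((w\<^sup>2 + k) + X * S) = (w\<^sup>2 + k)\<^sup>2 - of_int D1 * S\<^sup>2"
    unfolding X[symmetric] by algebra
  moreover have "poly (map_poly of_rat (biquad_conj_poly D1 D2 a b c d)) z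
      = (w\<^sup>2 + k)\<^sup>2 - of_int D1 * S\<^sup>2"
    unfolding biquad_conj_poly_def Let_def w_def k_def S_def
    by (simp add: map_poly_pCons of_rat_add of_rat_mult of_rat_diff of_rat_power of_rat_minus)
      algebra
  ultimately show ?thesis by (simp add: mult.assoc)
qed

lemma biquad_conj_poly_resolvent:
  fixes D1 D2 :: int and a b c d t :: rat
  defines "p \<equiv> coeff (biquad_conj_poly D1 D2 a b c d)"
  shows "(t - 16 * b\<^sup>2 * of_int D1) * (t - 16 * c\<^sup>2 * of_int D2)
      * (t - 16 * d\<^sup>2 * of_int D1 * of_int D2) =
    t ^ 3 - (3 * p 3 ^ 2 - 8 * p 2) * t\<^sup>2
      + (3 * p 3 ^ 4 - 16 * p 3 ^ 2 * p 2 + 16 * p 2 ^ 2 + 16 * p 3 * p 1 - 64 * p 0) * t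
      - (8 * p 1 - 4 * p 3 * p 2 + p 3 ^ 3)\<^sup>2"
  unfolding p_def biquad_conj_poly_def Let_def by (simp add: numeral_eq_Suc) algebra

definition at_least_two_nonzero :: "rat \<Rightarrow> rat \<Rightarrow> rat \<Rightarrow> bool" where
  "at_least_two_nonzero b c d \<longleftrightarrow> (b \<noteq> 0 \<or> c \<noteq> 0) \<and> (b \<noteq> 0 \<or> d \<noteq> 0) \<and> (c \<noteq> 0 \<or> d \<noteq> 0)"

locale biquadratic =
  fixes X Y :: complex and D1 D2 :: int
  assumes X_square: "X * X = of_int D1" and Y_square: "Y * Y = of_int D2"
    and X_notin_Rats: "X \<notin> \<rat>" and Y_notin_quad_ext: "Y \<notin> quad_ext \<rat> X"
begin

definition conjugates :: "rat \<Rightarrow> rat \<Rightarrow> rat \<Rightarrow> rat \<Rightarrow> complex list" where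
  "conjugates a b c d = [biquad_elem X Y a b c d, biquad_elem X (- Y) a b c d,
     biquad_elem (- X) Y a b c d, biquad_elem (- X) (- Y) a b c d]"

lemma is_subfield_quad_ext_X: "is_subfield (quad_ext \<rat> X)"
  by (rule is_subfield_quad_ext) (simp_all add: is_subfield_Rats X_square X_notin_Rats)

lemma biquad_elem_eq_0_iff:
  "biquad_elem X Y a b c d = 0 \<longleftrightarrow> a = 0 \<and> b = 0 \<and> c = 0 \<and> d = 0"
proof
  assume "biquad_elem X Y a b c d = 0"
  define P Q where "P = of_rat a + of_rat b * X" and "Q = of_rat c + of_rat d * X"
  have PQ: "P \<in> quad_ext \<rat> X" "Q \<in> quad_ext \<rat> X"
    unfolding P_def Q_def quad_ext_Rats_iff by blast+
  have sum: "P + Q * Y = 0"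
    using \<open>biquad_elem X Y a b c d = 0\<close> by (simp add: biquad_elem_def P_def Q_def algebra_simps)
  have "Q = 0"
  proof (rule ccontr)
    assume "Q \<noteq> 0"
    hence "Y = - P / Q" using sum by (simp add: field_simps add_eq_0_iff)
    thus False using Y_notin_quad_ext
      by (metis PQ is_subfield_quad_ext_X subfield_divide subfield_uminus)
  qed
  moreover from this have "P = 0" using sum by simp
  ultimately show "a = 0 \<and> b = 0 \<and> c = 0 \<and> d = 0"
    using Rats_lin_comb_eq_0[OF X_notin_Rats, of "of_rat a" "of_rat b"]
      Rats_lin_comb_eq_0[OF X_notin_Rats, of "of_rat c" "of_rat d"]
    by (simp add: P_def Q_def)
qed (simp add: biquad_elem_def)

lemma Y_notin_Rats: "Y \<notin> \<rat>"
proof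
  assume "Y \<in> \<rat>"
  then obtain q where "Y = of_rat q" by (elim Rats_cases)
  hence "biquad_elem X Y (- q) 0 1 0 = 0" by (simp add: biquad_elem_def of_rat_minus)
  thus False by (simp add: biquad_elem_eq_0_iff)
qed

lemma XY_notin_Rats: "X * Y \<notin> \<rat>"
proof
  assume "X * Y \<in> \<rat>"
  then obtain q where "X * Y = of_rat q" by (elim Rats_cases)
  hence "biquad_elem X Y (- q) 0 0 1 = 0" by (simp add: biquad_elem_def of_rat_minus)
  thus False by (simp add: biquad_elem_eq_0_iff)
qed

lemma X_notin_quad_ext_Y: "X \<notin> quad_ext \<rat> Y"
proof
  assume "X \<in> quad_ext \<rat> Y"
  then obtain x y where "X = of_rat x + of_rat y * Y" by (auto simp: quad_ext_Rats_iff)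
  hence "biquad_elem X Y x (- 1) y 0 = 0" by (simp add: biquad_elem_def)
  thus False by (simp add: biquad_elem_eq_0_iff)
qed

lemma X_notin_quad_ext_XY: "X \<notin> quad_ext \<rat> (X * Y)"
proof
  assume "X \<in> quad_ext \<rat> (X * Y)"
  then obtain x y where X_eq: "of_rat x + of_rat y * (X * Y) = X"
    unfolding quad_ext_Rats_iff by metis
  have "biquad_elem X Y x (- 1) 0 y = of_rat x + of_rat y * (X * Y) - X"
    by (simp add: biquad_elem_def of_rat_minus)
  also have "\<dots> = 0" by (simp add: X_eq)
  finally show False by (simp add: biquad_elem_eq_0_iff)
qed

lemma gen_fieldE:
  assumes "z \<in> gen_field {X, Y}"
  obtains a b c d where "z = biquad_elem X Y a b c d"
proof -
  have Y_square_in: "Y * Y \<in> quad_ext \<rat> X"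
    unfolding Y_square by (rule subsetD[OF subset_quad_ext[OF is_subfield_Rats] Rats_of_int])
  have "gen_field {X, Y} \<subseteq> quad_ext (quad_ext \<rat> X) Y"
    using is_subfield_quad_ext[OF is_subfield_quad_ext_X Y_square_in Y_notin_quad_ext]
      subset_quad_ext[OF is_subfield_quad_ext_X] in_quad_ext[OF is_subfield_Rats, of X]
      in_quad_ext[OF is_subfield_quad_ext_X, of Y]
    by (intro gen_field_least) auto
  with assms have "z \<in> quad_ext (quad_ext \<rat> X) Y" by blast
  then obtain P Q where "z = P + Q * Y" "P \<in> quad_ext \<rat> X" "Q \<in> quad_ext \<rat> X"
    by (rule quad_extE)
  then obtain a b c d where "z = (of_rat a + of_rat b * X) + (of_rat c + of_rat d * X) * Y"
    unfolding quad_ext_Rats_iff by blast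
  hence "z = biquad_elem X Y a b c d" by (simp add: biquad_elem_def algebra_simps)
  thus thesis by (rule that)
qed

text \<open>A generator of \<open>\<rat>(X, Y)\<close> lies in none of \<open>\<rat>(X)\<close>, \<open>\<rat>(Y)\<close>, \<open>\<rat>(XY)\<close>.\<close>
lemma primitive_biquad_elem:
  assumes "gen_field {biquad_elem X Y a b c d} = gen_field {X, Y}"
  shows "at_least_two_nonzero b c d"
proof -
  have gens_in: "X \<in> quad_ext \<rat> r \<and> Y \<in> quad_ext \<rat> r"
    if "r * r \<in> \<rat>" "r \<notin> \<rat>" "biquad_elem X Y a b c d \<in> quad_ext \<rat> r" for r
    using gen_field_singleton_eq_subset[OF assms]
      is_subfield_quad_ext[OF is_subfield_Rats that(1,2)]
      that(3) by blast
  have squares: "X * X \<in> \<rat>" "Y * Y \<in> \<rat>" "(X * Y) * (X * Y) \<in> \<rat>"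
    by (simp_all add: X_square Y_square algebra_simps flip: mult.assoc)
  have "biquad_elem X Y a b c d \<notin> quad_ext \<rat> X" if "c = 0" "d = 0"
    using gens_in[OF squares(1) X_notin_Rats] Y_notin_quad_ext by blast
  moreover have "biquad_elem X Y a b c d \<notin> quad_ext \<rat> Y" if "b = 0" "d = 0"
    using gens_in[OF squares(2) Y_notin_Rats] X_notin_quad_ext_Y by blast
  moreover have "biquad_elem X Y a b c d \<notin> quad_ext \<rat> (X * Y)" if "b = 0" "c = 0"
    using gens_in[OF squares(3) XY_notin_Rats] X_notin_quad_ext_XY by blast
  ultimately show ?thesis
    unfolding at_least_two_nonzero_def by (auto simp: biquad_elem_def quad_ext_Rats_iff)
qed

lemma conjugates_distinct:
  assumes "at_least_two_nonzero b c d"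
  shows "distinct (conjugates a b c d)"
proof -
  have neq: "x \<noteq> y" if "x - y = biquad_elem X Y 0 b' c' d'" "b' \<noteq> 0 \<or> c' \<noteq> 0 \<or> d' \<noteq> 0"
    for x y b' c' d' using that biquad_elem_eq_0_iff[of 0 b' c' d'] by auto
  let ?\<beta> = "\<lambda>X Y. biquad_elem X Y a b c d"
  have "?\<beta> X Y - ?\<beta> X (- Y) = biquad_elem X Y 0 0 (2 * c) (2 * d)"
    "?\<beta> X Y - ?\<beta> (- X) Y = biquad_elem X Y 0 (2 * b) 0 (2 * d)"
    "?\<beta> X Y - ?\<beta> (- X) (- Y) = biquad_elem X Y 0 (2 * b) (2 * c) 0"
    "?\<beta> X (- Y) - ?\<beta> (- X) Y = biquad_elem X Y 0 (2 * b) (- 2 * c) 0"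
    "?\<beta> X (- Y) - ?\<beta> (- X) (- Y) = biquad_elem X Y 0 (2 * b) 0 (- 2 * d)"
    "?\<beta> (- X) Y - ?\<beta> (- X) (- Y) = biquad_elem X Y 0 0 (2 * c) (- 2 * d)"
    by (simp_all add: biquad_elem_def of_rat_mult of_rat_minus algebra_simps)
  from this[THEN neq] show ?thesis
    using assms by (auto simp: conjugates_def at_least_two_nonzero_def)
qed

lemma conjugates_roots:
  assumes "ipoly f (biquad_elem X Y a b c d) = 0" "z \<in> set (conjugates a b c d)"
  shows "ipoly f z = 0"
proof -
  obtain a' b' c' d' where coords: "\<And>X Y. X * X = of_int D1 \<Longrightarrow> Y * Y = of_int D2 \<Longrightarrow>
     ipoly f (biquad_elem X Y a b c d) = biquad_elem X Y a' b' c' d'"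
    using poly_biquad_elem[of D1 D2 f a b c d] by blast
  have "biquad_elem X Y a' b' c' d' = 0" using assms(1) coords[OF X_square Y_square] by simp
  hence "a' = 0 \<and> b' = 0 \<and> c' = 0 \<and> d' = 0" by (simp add: biquad_elem_eq_0_iff)
  hence "ipoly f (biquad_elem X' Y' a b c d) = 0"
    if "X' * X' = of_int D1" "Y' * Y' = of_int D2" for X' Y'
    using coords[OF that] by (simp add: biquad_elem_def)
  thus ?thesis using assms(2) X_square Y_square by (auto simp: conjugates_def)
qed

lemma poly_biquad_conj_poly_conjugates:
  "poly (map_poly of_rat (biquad_conj_poly D1 D2 a b c d)) z = (\<Prod>\<beta>\<leftarrow>conjugates a b c d. z - \<beta>)"
  by (simp add: poly_biquad_conj_poly[OF X_square Y_square] conjugates_def mult_ac)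

lemma biquad_conj_poly_coeff_in_Ints:
  assumes "algebraic_int (biquad_elem X Y a b c d)" "at_least_two_nonzero b c d"
  shows "coeff (biquad_conj_poly D1 D2 a b c d) i \<in> \<int>"
proof (rule int_coeffs_if_roots_conjugate[OF assms(1)])
  let ?P = "biquad_conj_poly D1 D2 a b c d"
  have roots: "{z. poly (map_poly of_rat ?P) z = 0} = set (conjugates a b c d)"
    by (auto simp: poly_biquad_conj_poly_conjugates prod_list_zero_iff)
  show "lead_coeff ?P = 1" by (simp add: biquad_conj_poly_def Let_def)
  show "poly (map_poly of_rat ?P) (biquad_elem X Y a b c d) = 0"
    using roots by (auto simp: conjugates_def)
  have "degree ?P = 4" by (simp add: biquad_conj_poly_def Let_def)
  thus "card {z :: complex. poly (map_poly of_rat ?P) z = 0} = degree ?P"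
    unfolding roots using distinct_card[OF conjugates_distinct[OF assms(2)]]
    by (simp add: conjugates_def)
  show "ipoly q z = 0"
    if "poly (map_poly of_rat ?P) (z :: complex) = 0" "ipoly q (biquad_elem X Y a b c d) = 0"
    for z q
    using conjugates_roots[OF that(2)] that(1) roots by blast
qed

lemma resolvent_roots_in_Ints:
  assumes "algebraic_int (biquad_elem X Y a b c d)" "at_least_two_nonzero b c d"
  shows "16 * c\<^sup>2 * of_int D2 \<in> \<int>" "16 * d\<^sup>2 * of_int D1 * of_int D2 \<in> \<int>"
proof -
  define p where "p = coeff (biquad_conj_poly D1 D2 a b c d)"
  have p: "p i \<in> \<int>" for i using biquad_conj_poly_coeff_in_Ints[OF assms] by (simp add: p_def)
  note cubic = rat_root_of_monic_int_cubic[of "3 * p 3 ^ 2 - 8 * p 2"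
    "3 * p 3 ^ 4 - 16 * p 3 ^ 2 * p 2 + 16 * p 2 ^ 2 + 16 * p 3 * p 1 - 64 * p 0"
    "(8 * p 1 - 4 * p 3 * p 2 + p 3 ^ 3)\<^sup>2"]
  show "16 * c\<^sup>2 * of_int D2 \<in> \<int>"
    by (rule cubic)
      (use p biquad_conj_poly_resolvent[of "16 * c\<^sup>2 * of_int D2" b D1 c D2 d a]
        in \<open>simp_all add: p_def\<close>)
  show "16 * d\<^sup>2 * of_int D1 * of_int D2 \<in> \<int>"
    by (rule cubic)
      (use p biquad_conj_poly_resolvent[of "16 * d\<^sup>2 * of_int D1 * of_int D2" b D1 c D2 d a]
        in \<open>simp_all add: p_def\<close>)
qed

lemma prod_conjugates_le_mahler_alg:
  assumes "algebraic_int (biquad_elem X Y a b c d)" "at_least_two_nonzero b c d"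
  shows "(\<Prod>z\<leftarrow>conjugates a b c d. max 1 (cmod z)) \<le> mahler_alg (biquad_elem X Y a b c d)"
proof -
  define \<alpha> where "\<alpha> = biquad_elem X Y a b c d"
  obtain g where g: "g \<noteq> 0" "ipoly g \<alpha> = 0" using assms(1) unfolding \<alpha>_def by (rule algebraic_intE)
  have "(\<Prod>z\<leftarrow>conjugates a b c d. max 1 (cmod z)) = (\<Prod>z\<in>set (conjugates a b c d). max 1 (cmod z))"
    using conjugates_distinct[OF assms(2)] by (simp add: prod.distinct_set_conv_list)
  also have "\<dots> \<le> mahler_measure (map_poly of_int (min_int_poly \<alpha>))"
  proof (rule prod_max_1_le_mahler_measure)
    show "1 \<le> cmod (lead_coeff (map_poly of_int (min_int_poly \<alpha>) :: complex poly))"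
      using min_int_poly_monic[OF assms(1)] by (simp add: \<alpha>_def degree_map_poly coeff_map_poly)
    show "poly (map_poly of_int (min_int_poly \<alpha>)) z = 0" if "z \<in> set (conjugates a b c d)" for z
      using conjugates_roots[OF min_int_poly_root[OF g, unfolded \<alpha>_def] that] by (simp add: \<alpha>_def)
  qed
  finally show ?thesis by (simp add: \<alpha>_def mahler_alg_def)
qed

lemma mahler_alg_biquad_elem_ge:
  assumes "algebraic_int (biquad_elem X Y a b c d)" "at_least_two_nonzero b c d"
  shows "cmod (of_rat (c\<^sup>2 * of_int D2 - d\<^sup>2 * of_int D1 * of_int D2))
    \<le> mahler_alg (biquad_elem X Y a b c d)"
proof -
  define G where "G z = max 1 (cmod z)" for z
  define \<beta>1 \<beta>2 \<beta>3 \<beta>4 where "\<beta>1 = biquad_elem X Y a b c d"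
    and "\<beta>2 = biquad_elem X (- Y) a b c d" and "\<beta>3 = biquad_elem (- X) Y a b c d"
    and "\<beta>4 = biquad_elem (- X) (- Y) a b c d"
  have \<beta>: "conjugates a b c d = [\<beta>1, \<beta>2, \<beta>3, \<beta>4]"
    by (simp add: conjugates_def \<beta>1_def \<beta>2_def \<beta>3_def \<beta>4_def)
  have "(\<beta>1 - \<beta>2) * (\<beta>3 - \<beta>4) = 4 * of_rat (c\<^sup>2 * of_int D2 - d\<^sup>2 * of_int D1 * of_int D2)"
    unfolding \<beta>1_def \<beta>2_def \<beta>3_def \<beta>4_def biquad_elem_def
    by (simp add: of_rat_diff of_rat_mult of_rat_power algebra_simps power2_eq_square
        flip: X_square Y_square)
  hence "4 * cmod (of_rat (c\<^sup>2 * of_int D2 - d\<^sup>2 * of_int D1 * of_int D2))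
      = cmod (\<beta>1 - \<beta>2) * cmod (\<beta>3 - \<beta>4)" by (simp flip: norm_mult)
  also have "\<dots> \<le> (2 * G \<beta>1 * G \<beta>2) * (2 * G \<beta>3 * G \<beta>4)"
    unfolding G_def by (intro mult_mono norm_diff_le_max_1) auto
  also have "\<dots> \<le> 4 * mahler_alg (biquad_elem X Y a b c d)"
    using prod_conjugates_le_mahler_alg[OF assms] by (simp add: \<beta> G_def mult_ac)
  finally show ?thesis by simp
qed

lemma D1_ne_D2: "D1 \<noteq> D2"
proof
  assume "D1 = D2"
  have "biquad_elem X Y 0 (- 1) 1 0 * biquad_elem X Y 0 1 1 0 = Y * Y - X * X"
    by (simp add: biquad_elem_def algebra_simps)
  also have "\<dots> = 0" using X_square Y_square \<open>D1 = D2\<close> by simp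
  finally show False by (simp add: biquad_elem_eq_0_iff)
qed

lemma gen_field_sum: "gen_field {X + Y} = gen_field {X, Y}"
proof
  show "gen_field {X + Y} \<subseteq> gen_field {X, Y}"
    using gen_field_superset[of "{X, Y}"]
    by (intro gen_field_least is_subfield_gen_field)
      (auto intro: subfield_add is_subfield_gen_field)
  define F where "F = gen_field {X + Y}"
  have F: "is_subfield F" and sum_in: "X + Y \<in> F"
    using is_subfield_gen_field gen_field_superset by (auto simp: F_def)
  have "X * Y = ((X + Y) * (X + Y) - of_int D1 - of_int D2) / 2"
    by (simp add: field_simps flip: X_square Y_square)
  also have "\<dots> \<in> F"
    by (intro subfield_divide subfield_diff subfield_mult subfield_of_int subfield_numeral F sum_in)
  finally have prod_in: "X * Y \<in> F" .
  have "Y * Y - X * X \<noteq> 0" using D1_ne_D2 by (simp add: X_square Y_square)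
  \<comment> \<open>\<open>(X + Y) X Y = D2 X + D1 Y\<close>\<close>
  hence "X = ((X + Y) * (X * Y) - of_int D1 * (X + Y)) / (of_int D2 - of_int D1)"
    by (simp add: field_simps flip: X_square Y_square)
  also have "\<dots> \<in> F"
    by (intro subfield_divide subfield_diff subfield_mult subfield_of_int F sum_in prod_in)
  finally have "X \<in> F" .
  moreover have "Y \<in> F" using subfield_diff[OF F sum_in \<open>X \<in> F\<close>] by simp
  ultimately show "gen_field {X, Y} \<subseteq> gen_field {X + Y}"
    by (intro gen_field_least F[unfolded F_def]) (simp add: F_def)
qed

lemma algebraic_int_sum: "algebraic_int (X + Y)"
  unfolding algebraic_int_altdef_ipoly
proof (intro exI conjI)
  let ?p = "[:(D1 - D2)\<^sup>2, 0, - 2 * (D1 + D2), 0, 1:]"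
  show "ipoly ?p (X + Y) = 0"
    by (simp add: map_poly_pCons flip: X_square Y_square) algebra
  show "lead_coeff ?p = 1" by simp
qed

end

section \<open>The fields \<open>\<rat>(\<surd>(ml), \<surd>(nl))\<close>\<close>

lemma of_real_sqrt_of_int_square:
  "0 \<le> k \<Longrightarrow>
    complex_of_real (sqrt (real_of_int k)) * complex_of_real (sqrt (real_of_int k)) = of_int k"
  by (simp flip: of_real_mult)

locale squarefree_triple =
  fixes l m n :: int
  assumes l_pos: "0 < l" and l_less_m: "l < m" and m_less_n: "m < n"
    and coprime_lm: "coprime l m" and coprime_ln: "coprime l n" and coprime_mn: "coprime m n"
    and squarefree_l: "squarefree l" and squarefree_m: "squarefree m"
    and squarefree_n: "squarefree n"
begin

definition A :: complex where "A = complex_of_real (sqrt (real_of_int (m * l)))"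

definition B :: complex where "B = complex_of_real (sqrt (real_of_int (n * l)))"

lemma A_square: "A * A = of_int (m * l)"
  unfolding A_def using l_pos l_less_m by (intro of_real_sqrt_of_int_square) simp

lemma B_square: "B * B = of_int (n * l)"
  unfolding B_def using l_pos l_less_m m_less_n by (intro of_real_sqrt_of_int_square) simp

lemma squarefree_products:
  "squarefree (m * l)" "squarefree (n * l)" "squarefree (m * n)" "squarefree (l * m)"
  using coprime_lm coprime_ln coprime_mn squarefree_l squarefree_m squarefree_n
  by (auto intro!: squarefree_mult_coprime simp: coprime_commute)

lemma products_ne_1: "m * l \<noteq> 1" "n * l \<noteq> 1" "m * n \<noteq> 1" "l * m \<noteq> 1"
  using l_pos l_less_m m_less_n by (auto simp: zmult_eq_1_iff)

sublocale biquadratic A B "m * l" "n * l"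
proof
  show "A * A = of_int (m * l)" "B * B = of_int (n * l)" by (fact A_square, fact B_square)
  show "A \<notin> \<rat>"
    by (rule sqrt_squarefree_notin_Rats[OF A_square squarefree_products(1) products_ne_1(1)])
  show "B \<notin> quad_ext \<rat> A"
  proof
    assume "B \<in> quad_ext \<rat> A"
    from sqrt_in_quad_ext_Rats_cases[OF A_square \<open>A \<notin> \<rat>\<close> B_square this] show False
    proof (elim disjE exE)
      fix q :: rat assume "q\<^sup>2 = of_int (n * l)"
      thus False using squarefree_rat_square_eq squarefree_products(2) products_ne_1(2) by blast
    next
      fix q :: rat assume "q\<^sup>2 * of_int (m * l) = of_int (n * l)"
      hence "(q * of_int m)\<^sup>2 = of_int (m * n)"
        using l_pos by (simp add: power2_eq_square algebra_simps)
      thus False using squarefree_rat_square_eq squarefree_products(3) products_ne_1(3) by blast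
    qed
  qed
qed

lemma n_div_16_le_coords:
  assumes "algebraic_int (biquad_elem A B a b c d)" "at_least_two_nonzero b c d"
  shows "real_of_int n / 16
    \<le> cmod (of_rat (c\<^sup>2 * of_int (n * l) - d\<^sup>2 * of_int (m * l) * of_int (n * l)))"
proof -
  note in_Ints = resolvent_roots_in_Ints[OF assms]
  have "(4 * c)\<^sup>2 * of_int (n * l) \<in> \<int>"
    using in_Ints(1) by (simp add: power_mult_distrib)
  hence "4 * c \<in> \<int>" by (rule squarefree_square_mult_in_Ints[OF squarefree_products(2)])
  then obtain U where U: "4 * c = of_int U" by (elim Ints_cases)
  have "(4 * d * of_int l)\<^sup>2 * of_int (m * n) = 16 * d\<^sup>2 * of_int (m * l) * of_int (n * l)"
    by (simp add: power_mult_distrib power2_eq_square)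
  hence "(4 * d * of_int l)\<^sup>2 * of_int (m * n) \<in> \<int>" using in_Ints(2) by (simp only:)
  hence "4 * d * of_int l \<in> \<int>" by (rule squarefree_square_mult_in_Ints[OF squarefree_products(3)])
  then obtain W where W: "4 * d * of_int l = of_int W" by (elim Ints_cases)
  define k where "k = l * U\<^sup>2 - m * W\<^sup>2"
  have "U \<noteq> 0 \<or> W \<noteq> 0" using assms(2) U W l_pos by (auto simp: at_least_two_nonzero_def)
  hence "k \<noteq> 0" using squarefree_mult_squares_eq[OF squarefree_products(4) products_ne_1(4)]
    by (auto simp: k_def)
  have "16 * (c\<^sup>2 * of_int (n * l) - d\<^sup>2 * of_int (m * l) * of_int (n * l))
      = of_int n * (of_int l * (4 * c)\<^sup>2 - of_int m * (4 * d * of_int l)\<^sup>2)"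
    by (simp add: power2_eq_square algebra_simps)
  also have "\<dots> = of_int (n * k)" by (simp add: U W k_def)
  finally have "c\<^sup>2 * of_int (n * l) - d\<^sup>2 * of_int (m * l) * of_int (n * l) = of_int (n * k) / 16"
    by (simp add: field_simps)
  hence q_eq: "of_rat (c\<^sup>2 * of_int (n * l) - d\<^sup>2 * of_int (m * l) * of_int (n * l))
      = (of_int (n * k) / 16 :: complex)"
    by (simp only: of_rat_divide of_rat_of_int_eq of_rat_numeral_eq)
  have "real_of_int n / 16 \<le> real_of_int n * \<bar>real_of_int k\<bar> / 16"
    using \<open>k \<noteq> 0\<close> l_pos l_less_m m_less_n by (simp add: divide_right_mono)
  thus ?thesis unfolding q_eq using l_pos l_less_m m_less_n by (simp add: norm_divide norm_mult)
qed

lemma n_div_16_le_mahler_alg: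
  assumes "\<alpha> \<in> ring_of_integers (gen_field {A, B})" "gen_field {\<alpha>} = gen_field {A, B}"
  shows "real_of_int n / 16 \<le> mahler_alg \<alpha>"
proof -
  have "\<alpha> \<in> gen_field {A, B}" and \<alpha>: "algebraic_int \<alpha>"
    using assms(1) by (auto simp: ring_of_integers_def)
  then obtain a b c d where \<alpha>_eq: "\<alpha> = biquad_elem A B a b c d" by (elim gen_fieldE)
  have "at_least_two_nonzero b c d"
    using primitive_biquad_elem assms(2) by (simp add: \<alpha>_eq)
  with \<alpha> n_div_16_le_coords mahler_alg_biquad_elem_ge show ?thesis
    unfolding \<alpha>_eq by (meson order_trans)
qed

lemma sum_is_primitive_integer:
  "A + B \<in> ring_of_integers (gen_field {A, B})" "gen_field {A + B} = gen_field {A, B}"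
  using gen_field_sum algebraic_int_sum gen_field_superset[of "{A + B}"]
  by (auto simp: ring_of_integers_def)

end

theorem proposition3p1:
  fixes l m n :: int
  assumes "0 < l" "l < m" "m < n"
    and "coprime l m" "coprime l n" "coprime m n"
    and "squarefree l" "squarefree m" "squarefree n"
  shows "real_of_int n / 48 \<le>
    mahler_ring_of_integers
      (gen_field {complex_of_real (sqrt (real_of_int (m * l))),
                  complex_of_real (sqrt (real_of_int (n * l)))})"
proof -
  interpret squarefree_triple l m n using assms by unfold_locales
  have "real_of_int n / 48 \<le> mahler_alg \<alpha>"
    if "\<alpha> \<in> ring_of_integers (gen_field {A, B})" "gen_field {\<alpha>} = gen_field {A, B}" for \<alpha>
    using n_div_16_le_mahler_alg[OF that] m_less_n l_less_m l_pos by linarith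
  hence "real_of_int n / 48 \<le> mahler_ring_of_integers (gen_field {A, B})"
    unfolding mahler_ring_of_integers_def using sum_is_primitive_integer
    by (intro cInf_greatest) auto
  thus ?thesis by (simp add: A_def B_def)
qed

end
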